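(* Let $p$ be a prime and $G$ a finite $p$-group in which every non-abelian subgroup $H$ satisfies $C_G(H)\le H$. If $g\in G\setminus\Phi(G)$, then $C_G(g)$ is abelian.
   Context: $\Phi(G)$ denotes the Frattini subgroup of $G$ and $C_G(\cdot)$ centralizers. *)

theory Defs
  imports "HOL-Algebra.Algebra"
begin

definition centralizer :: "('a, 'b) monoid_scheme \<Rightarrow> 'a set \<Rightarrow> 'a set" where
  "centralizer G S = {x \<in> carrier G. \<forall>y\<in>S. x \<otimes>\<^bsub>G\<^esub> y = y \<otimes>\<^bsub>G\<^esub> x}"

definition abelian_set :: "('a, 'b) monoid_scheme \<Rightarrow> 'a set \<Rightarrow> bool" where
  "abelian_set G H \<longleftrightarrow> (\<forall>x\<in>H. \<forall>y\<in>H. x \<otimes>\<^bsub>G\<^esub> y = y \<otimes>\<^bsub>G\<^esub> x)"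

definition maximal_subgroup :: "('a, 'b) monoid_scheme \<Rightarrow> 'a set \<Rightarrow> bool" where
  "maximal_subgroup G H \<longleftrightarrow> subgroup H G \<and> H \<noteq> carrier G \<and>
     (\<forall>K. subgroup K G \<and> H \<subseteq> K \<longrightarrow> K = H \<or> K = carrier G)"

text \<open>Frattini subgroup: intersection of all maximal subgroups (= G if there are none).\<close>
definition frattini :: "('a, 'b) monoid_scheme \<Rightarrow> 'a set" where
  "frattini G = carrier G \<inter> \<Inter> {H. maximal_subgroup G H}"

end

theory Submission
  imports Defs
begin

text \<open>Since \<open>g \<notin> \<Phi>(G)\<close>, some maximal subgroup \<open>M\<close> misses \<open>g\<close>; in a \<open>p\<close>-group \<open>M\<close> is normal
  (normalizers grow, by counting fixed points of a \<open>p\<close>-group action mod \<open>p\<close>).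
  Put \<open>C = C\<^sub>G(g)\<close> and \<open>D = C\<^sub>G(C)\<close>, so \<open>g \<in> D \<subseteq> C\<close>. As \<open>g\<close> centralizes \<open>C \<inter> M\<close> but lies
  outside it, the hypothesis forces \<open>C \<inter> M\<close> to be abelian. Maximality gives \<open>MD = G\<close>, hence
  \<open>C = (C \<inter> M) D\<close> by Dedekind's law, a product of two commuting abelian subgroups.\<close>

lemma (in group_action) orbit_subset: "x \<in> E \<Longrightarrow> orbit G \<phi> x \<subseteq> E"
  unfolding orbit_def using element_image by blast

lemma (in group_action) orbit_eq:
  assumes "x \<in> E" "y \<in> orbit G \<phi> x"
  shows "orbit G \<phi> y = orbit G \<phi> x"
  using assms orbit_subset orbit_sym orbit_trans by (meson subset_antisym subsetI subsetD)

lemma (in group_action) pgroup_dvd_card_orbit: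
  assumes "Factorial_Ring.prime p" "order G = p ^ n" "x \<in> E" "orbit G \<phi> x \<noteq> {x}"
  shows "p dvd card (orbit G \<phi> x)"
proof -
  have "card (orbit G \<phi> x) dvd p ^ n"
    using orbit_stabilizer_theorem[OF assms(3)] assms(2) by (metis dvd_triv_left)
  then obtain i where i: "card (orbit G \<phi> x) = p ^ i"
    using divides_primepow_nat[OF assms(1)] by auto
  have "i \<noteq> 0"
  proof
    assume "i = 0"
    then obtain y where "orbit G \<phi> x = {y}" using i card_1_singletonE by auto
    then show False using orbit_refl[OF assms(3)] assms(4) by simp
  qed
  then show ?thesis using i by simp
qed

theorem (in group_action) pgroup_card_fixed_points_mod:
  assumes "Factorial_Ring.prime p" "order G = p ^ n" "finite A" "A \<subseteq> E"
    and invariant: "\<And>g x. g \<in> carrier G \<Longrightarrow> x \<in> A \<Longrightarrow> \<phi> g x \<in> A"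
  shows "card {x \<in> A. orbit G \<phi> x = {x}} mod p = card A mod p"
proof -
  define F where "F = {x \<in> A. orbit G \<phi> x = {x}}"
  have orbit_A: "orbit G \<phi> x \<subseteq> A" if "x \<in> A" for x
    using invariant that unfolding orbit_def by auto
  have moved: "orbit G \<phi> x \<subseteq> A - F" if "x \<in> A - F" for x
  proof
    fix y assume y: "y \<in> orbit G \<phi> x"
    have "orbit G \<phi> y = orbit G \<phi> x" using orbit_eq y that assms(4) by blast
    moreover have "x \<in> orbit G \<phi> x" using orbit_refl that assms(4) by blast
    ultimately show "y \<in> A - F" using y that orbit_A unfolding F_def by auto
  qed
  have "\<Union> (orbit G \<phi> ` (A - F)) = A - F"
    using moved orbit_refl assms(4) by blast
  moreover have "p dvd card (\<Union> (orbit G \<phi> ` (A - F)))"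
  proof (rule dvd_partition)
    show "finite (\<Union> (orbit G \<phi> ` (A - F)))"
      using \<open>\<Union> (orbit G \<phi> ` (A - F)) = A - F\<close> assms(3) by simp
    show "\<forall>c\<in>orbit G \<phi> ` (A - F). p dvd card c"
      using pgroup_dvd_card_orbit[OF assms(1,2)] assms(4) unfolding F_def by blast
    show "\<forall>c1\<in>orbit G \<phi> ` (A - F). \<forall>c2\<in>orbit G \<phi> ` (A - F). c1 \<noteq> c2 \<longrightarrow> c1 \<inter> c2 = {}"
      using orbit_eq assms(4) by blast
  qed
  moreover have "card A = card F + card (A - F)"
    using assms(3) card_Diff_subset[of F A] card_mono[of A F] unfolding F_def by auto
  ultimately show ?thesis unfolding F_def by auto
qed

lemma prime_dvd_card_other_element:
  assumes "Factorial_Ring.prime p" "finite F" "a \<in> F" "p dvd card F"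
  shows "\<exists>b \<in> F. b \<noteq> a"
proof (rule ccontr)
  assume "\<not> (\<exists>b \<in> F. b \<noteq> a)"
  then have "F = {a}" using assms(3) by blast
  then show False using assms(1,4) by simp
qed

lemma pgroup_finite:
  assumes "Factorial_Ring.prime p" "order G = p ^ n"
  shows "finite (carrier G)"
  using assms card_ge_0_finite prime_gt_0_nat unfolding order_def by (metis zero_less_power)

lemma (in group) pgroup_subgroup_card:
  assumes "Factorial_Ring.prime p" "order G = p ^ n" "subgroup H G"
  shows "\<exists>k\<le>n. card H = p ^ k"
  using lagrange[OF assms(3)] assms(2) divides_primepow_nat[OF assms(1)] by (metis dvd_triv_right)

lemma (in group) pgroup_proper_subgroup_dvd_index:
  assumes "Factorial_Ring.prime p" "order G = p ^ n" "subgroup H G" "H \<noteq> carrier G"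
  shows "p dvd card (rcosets H)"
proof -
  have index: "card (rcosets H) * card H = order G" using lagrange[OF assms(3)] .
  then obtain i where i: "card (rcosets H) = p ^ i"
    using assms(2) divides_primepow_nat[OF assms(1)] by (metis dvd_triv_left)
  have "finite (carrier G)" using pgroup_finite[OF assms(1,2)] .
  moreover have "card H \<noteq> order G"
    using assms(3,4) calculation card_subset_eq subgroup.subset unfolding order_def by blast
  ultimately have "i \<noteq> 0" using index i by (metis mult_1 power_0)
  then show ?thesis using i by simp
qed

lemma (in group) conjugate_rcos:
  assumes "subgroup H G" "h \<in> H" "x \<in> carrier G"
  shows "h <# (H #> x) #> inv h = H #> (x \<otimes> inv h)"
proof -
  have h: "h \<in> carrier G" and H: "H \<subseteq> carrier G"
    using assms(1,2) subgroup.subset by auto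
  have "h <# (H #> x) = H #> x"
    using coset_assoc[OF h assms(3) H] coset_join3[OF h assms(1,2)] by simp
  then show ?thesis using coset_mult_assoc[OF H assms(3)] h by simp
qed

lemma (in group) normalizerI:
  assumes "finite H" "H \<subseteq> carrier G" "x \<in> carrier G"
    and "\<And>h. h \<in> H \<Longrightarrow> x \<otimes> h \<otimes> inv x \<in> H"
  shows "x \<in> normalizer G H"
proof -
  have conj: "(x <# H) #> inv x = (\<lambda>h. x \<otimes> h \<otimes> inv x) ` H"
    unfolding l_coset_def r_coset_def by auto
  have inj: "inj_on (\<lambda>h. x \<otimes> h \<otimes> inv x) H"
  proof (rule inj_onI)
    fix a b assume "a \<in> H" "b \<in> H" "x \<otimes> a \<otimes> inv x = x \<otimes> b \<otimes> inv x"
    then show "a = b" using assms(2,3) by (simp add: subset_iff)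
  qed
  then have "(x <# H) #> inv x = H"
    unfolding conj using endo_inj_surj[OF assms(1) _ inj] assms(4) by (simp add: image_subset_iff)
  then show ?thesis
    unfolding normalizer_def stabilizer_def using assms(2,3) by simp
qed

lemma (in group) normalizer_eq_carrier_imp_normal:
  assumes "subgroup H G" "normalizer G H = carrier G"
  shows "H \<lhd> G"
proof -
  have "(x <# H) #> inv x = H" if "x \<in> carrier G" for x
    using that assms subgroup.subset unfolding normalizer_def stabilizer_def by fastforce
  moreover have "x \<otimes> h \<otimes> inv x \<in> (x <# H) #> inv x" if "h \<in> H" for x h
    using that unfolding l_coset_def r_coset_def by blast
  ultimately show ?thesis using assms(1) normal_inv_iff by blast
qed

lemma (in group) pgroup_fixed_rcoset:
  assumes "Factorial_Ring.prime p" "order G = p ^ n" "subgroup H G" "H \<noteq> carrier G"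
  shows "\<exists>x \<in> carrier G - H. \<forall>h \<in> H. H #> (x \<otimes> inv h) = H #> x"
proof -
  \<comment> \<open>\<open>H\<close> acts on its right cosets by conjugation, fixing \<open>H\<close> itself; the number of fixed
     cosets is \<open>\<equiv> [G:H] \<equiv> 0 (mod p)\<close>, so another one exists.\<close>
  define \<phi> where "\<phi> = (\<lambda>g. \<lambda>S \<in> {S. S \<subseteq> carrier G}. g <# S #> inv g)"
  interpret H_action: group_action "G\<lparr>carrier := H\<rparr>" "{S. S \<subseteq> carrier G}" \<phi>
    unfolding \<phi>_def by (rule group_action.induced_action[OF action_by_conjugation_on_power_set assms(3)])
  have Hs: "H \<subseteq> carrier G" using assms(3) subgroup.subset by blast
  have \<phi>_rcos: "\<phi> h (H #> x) = H #> (x \<otimes> inv h)" if "h \<in> H" "x \<in> carrier G" for h x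
    using conjugate_rcos[OF assms(3) that] r_coset_subset_G[OF Hs that(2)] unfolding \<phi>_def by simp
  obtain k where k: "order (G\<lparr>carrier := H\<rparr>) = p ^ k"
    using pgroup_subgroup_card[OF assms(1,2,3)] unfolding order_def by auto
  define F where "F = {S \<in> rcosets H. orbit (G\<lparr>carrier := H\<rparr>) \<phi> S = {S}}"
  have "finite (carrier G)" using pgroup_finite[OF assms(1,2)] .
  then have fin: "finite (rcosets H)"
    unfolding RCOSETS_def by simp
  have "card F mod p = card (rcosets H) mod p"
    unfolding F_def
  proof (rule H_action.pgroup_card_fixed_points_mod[OF assms(1) k fin])
    show "rcosets H \<subseteq> {S. S \<subseteq> carrier G}"
      using r_coset_subset_G[OF Hs] unfolding RCOSETS_def by auto
    show "\<phi> h S \<in> rcosets H" if "h \<in> carrier (G\<lparr>carrier := H\<rparr>)" "S \<in> rcosets H" for h S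
      using that \<phi>_rcos Hs unfolding RCOSETS_def by (auto intro!: bexI[of _ "_ \<otimes> inv h"])
  qed
  then have "p dvd card F"
    using pgroup_proper_subgroup_dvd_index[OF assms] by (simp add: mod_eq_0_iff_dvd)
  moreover have "H \<in> F"
  proof -
    have "\<phi> h H = H" if "h \<in> H" for h
      using \<phi>_rcos[OF that one_closed] coset_join2[OF _ assms(3)] subgroup.m_inv_closed[OF assms(3) that] Hs
      by (simp add: subset_iff)
    then have "orbit (G\<lparr>carrier := H\<rparr>) \<phi> H = {H}"
      unfolding orbit_def using subgroup.one_closed[OF assms(3)] by auto
    then show ?thesis
      unfolding F_def using rcosetsI[OF Hs one_closed] Hs by simp
  qed
  moreover have "finite F" using fin unfolding F_def by simp
  ultimately have "\<exists>S \<in> F. S \<noteq> H"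
    by (metis prime_dvd_card_other_element[OF assms(1)])
  then obtain x where x: "x \<in> carrier G" "H #> x \<in> F" "H #> x \<noteq> H"
    unfolding F_def RCOSETS_def by auto
  have "x \<notin> H" using x coset_join2[OF _ assms(3)] by auto
  moreover have "H #> (x \<otimes> inv h) = H #> x" if "h \<in> H" for h
  proof -
    have "\<phi> h (H #> x) \<in> orbit (G\<lparr>carrier := H\<rparr>) \<phi> (H #> x)"
      unfolding orbit_def using that by auto
    then show ?thesis using x(2) \<phi>_rcos[OF that x(1)] unfolding F_def by simp
  qed
  ultimately show ?thesis using x(1) by blast
qed

lemma (in group) pgroup_subgroup_psubset_normalizer:
  assumes "Factorial_Ring.prime p" "order G = p ^ n" "subgroup H G" "H \<noteq> carrier G"
  shows "H \<subset> normalizer G H"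
proof -
  have Hs: "H \<subseteq> carrier G" using assms(3) subgroup.subset by blast
  have finH: "finite H" using pgroup_finite[OF assms(1,2)] Hs finite_subset by blast
  obtain x where x: "x \<in> carrier G" "x \<notin> H" and fixed: "\<And>h. h \<in> H \<Longrightarrow> H #> (x \<otimes> inv h) = H #> x"
    using pgroup_fixed_rcoset[OF assms] by blast
  have "x \<otimes> h \<otimes> inv x \<in> H" if h: "h \<in> H" for h
  proof -
    have "H #> (x \<otimes> h) = H #> x"
      using fixed[OF subgroup.m_inv_closed[OF assms(3) h]] h Hs by (simp add: subset_iff)
    then have "x \<otimes> h \<in> H #> x"
      using rcos_self[OF _ assms(3)] x(1) h Hs by (metis m_closed subsetD)
    then show ?thesis using subgroup.rcos_module_imp[OF assms(3) is_group x(1)] by simp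
  qed
  then have "x \<in> normalizer G H" using normalizerI[OF finH Hs x(1)] by blast
  moreover have "H \<subseteq> normalizer G H"
    using normalizerI[OF finH Hs] Hs subgroup.m_closed[OF assms(3)] subgroup.m_inv_closed[OF assms(3)]
    by (simp add: subset_iff)
  ultimately show ?thesis using x(2) by blast
qed

lemma (in group) pgroup_maximal_subgroup_normal:
  assumes "Factorial_Ring.prime p" "order G = p ^ n" "maximal_subgroup G M"
  shows "M \<lhd> G"
proof -
  have M: "subgroup M G" "M \<noteq> carrier G"
    using assms(3) unfolding maximal_subgroup_def by auto
  then have "normalizer G M = carrier G"
    using assms(3) pgroup_subgroup_psubset_normalizer[OF assms(1,2) M]
      normalizer_imp_subgroup[OF subgroup.subset[OF M(1)]]
    unfolding maximal_subgroup_def by blast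
  then show ?thesis using normalizer_eq_carrier_imp_normal[OF M(1)] by blast
qed

lemma (in group) inv_commute:
  assumes "a \<in> carrier G" "y \<in> carrier G" "a \<otimes> y = y \<otimes> a"
  shows "inv a \<otimes> y = y \<otimes> inv a"
proof -
  have "inv a \<otimes> y = inv a \<otimes> (y \<otimes> a) \<otimes> inv a" using assms(1,2) by (simp add: m_assoc)
  also have "\<dots> = inv a \<otimes> (a \<otimes> y) \<otimes> inv a" using assms(3) by simp
  also have "\<dots> = y \<otimes> inv a" using assms(1,2) by (simp add: m_assoc[symmetric])
  finally show ?thesis .
qed

lemma (in group) centralizer_subgroup:
  assumes "S \<subseteq> carrier G"
  shows "subgroup (centralizer G S) G"
proof (rule subgroupI)
  show "centralizer G S \<subseteq> carrier G" unfolding centralizer_def by auto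
  show "centralizer G S \<noteq> {}" using assms unfolding centralizer_def by (auto intro!: exI[of _ \<one>])
next
  fix a b assume a: "a \<in> centralizer G S" and b: "b \<in> centralizer G S"
  show "inv a \<in> centralizer G S"
    using a assms unfolding centralizer_def by (auto simp: subset_iff intro: inv_commute)
  show "a \<otimes> b \<in> centralizer G S"
    using a b assms unfolding centralizer_def by (auto simp: subset_iff m_assoc) (metis m_assoc)
qed

lemma centralizer_antimono: "S \<subseteq> T \<Longrightarrow> centralizer G T \<subseteq> centralizer G S"
  unfolding centralizer_def by blast

lemma subset_centralizer_centralizer:
  "S \<subseteq> carrier G \<Longrightarrow> S \<subseteq> centralizer G (centralizer G S)"
  unfolding centralizer_def by auto

lemma (in group) subgroup_eq_Int_set_mult:
  assumes "subgroup C G" "D \<subseteq> C" "C \<subseteq> M <#> D" "M \<subseteq> carrier G"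
  shows "C = (C \<inter> M) <#> D"
proof
  show "(C \<inter> M) <#> D \<subseteq> C"
    using assms(2) subgroup.m_closed[OF assms(1)] unfolding set_mult_def by auto
  show "C \<subseteq> (C \<inter> M) <#> D"
  proof
    fix x assume x: "x \<in> C"
    then obtain m d where md: "m \<in> M" "d \<in> D" "x = m \<otimes> d"
      using assms(3) unfolding set_mult_def by auto
    have "d \<in> carrier G" "m \<in> carrier G" using md assms(1,2,4) subgroup.subset by blast+
    then have "m = x \<otimes> inv d" using md(3) by (simp add: m_assoc)
    then have "m \<in> C"
      using x md(2) assms(2) subgroup.m_closed[OF assms(1)] subgroup.m_inv_closed[OF assms(1)] by blast
    then show "x \<in> (C \<inter> M) <#> D" using md unfolding set_mult_def by blast
  qed
qed

lemma (in group) abelian_set_set_mult: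
  assumes "abelian_set G K" "abelian_set G D" "K \<subseteq> carrier G" "D \<subseteq> centralizer G K"
  shows "abelian_set G (K <#> D)"
  unfolding abelian_set_def
proof (intro ballI)
  fix x y assume "x \<in> K <#> D" "y \<in> K <#> D"
  then obtain k d k' d' where kd: "k \<in> K" "d \<in> D" "x = k \<otimes> d" "k' \<in> K" "d' \<in> D" "y = k' \<otimes> d'"
    unfolding set_mult_def by auto
  have carrier: "k \<in> carrier G" "k' \<in> carrier G" "d \<in> carrier G" "d' \<in> carrier G"
    using kd assms(3,4) unfolding centralizer_def by auto
  have "d \<otimes> k' = k' \<otimes> d" "d' \<otimes> k = k \<otimes> d'"
    using kd assms(4) unfolding centralizer_def by auto
  moreover have "k \<otimes> k' = k' \<otimes> k" "d \<otimes> d' = d' \<otimes> d"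
    using kd assms(1,2) unfolding abelian_set_def by auto
  ultimately have "k \<otimes> (d \<otimes> k') \<otimes> d' = k' \<otimes> (d' \<otimes> k) \<otimes> d"
    using carrier by (simp add: m_assoc) (metis m_assoc m_closed)
  then show "x \<otimes> y = y \<otimes> x" using kd carrier by (simp add: m_assoc)
qed

lemma (in group) abelian_set_centralizer_Int:
  assumes "\<And>H. subgroup H G \<Longrightarrow> \<not> abelian_set G H \<Longrightarrow> centralizer G H \<subseteq> H"
    and "subgroup M G" "g \<in> carrier G" "g \<notin> M"
  shows "abelian_set G (centralizer G {g} \<inter> M)"
proof (rule ccontr)
  let ?C = "centralizer G {g}"
  assume "\<not> abelian_set G (?C \<inter> M)"
  then have "centralizer G (?C \<inter> M) \<subseteq> M"
    using assms(1)[OF subgroup_Int[OF centralizer_subgroup assms(2)]] assms(3) by (simp add: le_infE)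
  moreover have "g \<in> centralizer G (?C \<inter> M)"
    using subset_centralizer_centralizer[of "{g}" G] centralizer_antimono[of "?C \<inter> M" ?C G] assms(3)
    by auto
  ultimately show False using assms(4) by (auto dest: subsetD)
qed

lemma (in group) abelian_set_centralizer_outside_maximal_normal:
  assumes "maximal_subgroup G M" "M \<lhd> G" "g \<in> carrier G" "g \<notin> M"
    and "abelian_set G (centralizer G {g} \<inter> M)"
  shows "abelian_set G (centralizer G {g})"
proof -
  define C where "C = centralizer G {g}"
  define D where "D = centralizer G C"
  have C_sub: "subgroup C G" unfolding C_def using assms(3) by (simp add: centralizer_subgroup)
  have D_sub: "subgroup D G" unfolding D_def using C_sub by (simp add: centralizer_subgroup subgroup.subset)
  have g_C: "g \<in> C" unfolding C_def centralizer_def using assms(3) by simp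
  have g_D: "g \<in> D" unfolding D_def C_def using subset_centralizer_centralizer[of "{g}" G] assms(3) by simp
  have D_C: "D \<subseteq> C" unfolding D_def using g_C by (simp add: centralizer_antimono C_def)
  have D_abelian: "abelian_set G D"
    using D_C unfolding abelian_set_def D_def centralizer_def by (auto dest: subsetD)
  interpret second_isomorphism_grp M G D
    using assms(2) D_sub by (simp add: second_isomorphism_grp_def second_isomorphism_grp_axioms_def)
  have "g \<in> M <#> D" using g_D S_contained_in_set_mult by (auto dest: subsetD)
  then have "M <#> D = carrier G"
    using assms(1,4) normal_set_mult_subgroup H_contained_in_set_mult unfolding maximal_subgroup_def by auto
  then have "C = (C \<inter> M) <#> D"
    using subgroup_eq_Int_set_mult[OF C_sub D_C] subgroup.subset[OF C_sub] subgroup.subset[OF is_subgroup]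
    by simp
  moreover have "C \<inter> M \<subseteq> carrier G" using subgroup.subset[OF C_sub] by blast
  moreover have "D \<subseteq> centralizer G (C \<inter> M)"
    unfolding D_def by (rule centralizer_antimono[OF Int_lower1])
  ultimately have "abelian_set G C"
    using abelian_set_set_mult[OF assms(5)[folded C_def] D_abelian] by simp
  then show ?thesis unfolding C_def .
qed

theorem lemma6p8:
  fixes G (structure) and p :: nat
  assumes "Factorial_Ring.prime p"
    and "group G"
    and "finite (carrier G)"
    and "\<exists>n. order G = p ^ n"
    and "\<And>H. subgroup H G \<Longrightarrow> \<not> abelian_set G H \<Longrightarrow> centralizer G H \<subseteq> H"
    and "g \<in> carrier G - frattini G"
  shows "abelian_set G (centralizer G {g})"
proof -
  interpret group G by (rule assms(2))
  obtain n where order: "order G = p ^ n" using assms(4) by blast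
  obtain M where M: "maximal_subgroup G M" "g \<notin> M"
    using assms(6) unfolding frattini_def by blast
  have g: "g \<in> carrier G" using assms(6) by blast
  have "M \<lhd> G" using pgroup_maximal_subgroup_normal[OF assms(1) order M(1)] .
  moreover have "abelian_set G (centralizer G {g} \<inter> M)"
    using abelian_set_centralizer_Int[OF assms(5) _ g M(2)] M(1) unfolding maximal_subgroup_def by blast
  ultimately show ?thesis
    using abelian_set_centralizer_outside_maximal_normal[OF M(1) _ g M(2)] by blast
qed

end
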